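(* Let $\varphi=\frac{1+\sqrt5}{2}$ and for every integer $k$ let $F_k=\frac{\varphi^k-(-1/\varphi)^k}{\varphi+1/\varphi}$. On the complex vector space with basis $\{|n_1,n_2\rangle:n_1,n_2\ge0\}$ define, for $i=1,2$, operators $N_i$, $b_i$, $b_i^+$ acting on the $i$-th index by $N_1|n_1,n_2\rangle=n_1|n_1,n_2\rangle$, $b_1^+|n_1,n_2\rangle=\sqrt{F_{n_1+1}}|n_1+1,n_2\rangle$, $b_1|n_1,n_2\rangle=\sqrt{F_{n_1}}|n_1-1,n_2\rangle$ (zero if $n_1=0$), and analogously for index 2. Let $(-1)^{-N_2/2}$ be the diagonal operator acting on $|n_1,n_2\rangle$ by $e^{-i\pi n_2/2}$, let $J_z=\frac{N_1-N_2}2$, and let $[2J_z]_F$ be the diagonal operator acting by $F_{n_1-n_2}$. Define $$\tilde J_+^F=(-1)^{-N_2/2}b_1^+b_2,\qquad \tilde J_-^F=b_2^+b_1(-1)^{-N_2/2},\qquad \tilde J_z^F=J_z.$$ Then $$\tilde J_+^F\tilde J_-^F+\tilde J_-^F\tilde J_+^F=[2J_z]_F,\qquad [\tilde J_z^F,\tilde J_\pm^F]=\pm\tilde J_\pm^F.$$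
   Context: $[A,B]=AB-BA$. *)

theory Defs
  imports Complex_Main
begin

definition phi :: real where "phi = (1 + sqrt 5) / 2"

definition Fib :: "int \<Rightarrow> real" where
  "Fib k = (phi powi k - (- 1 / phi) powi k) / (phi + 1 / phi)"

text \<open>Vectors of the space with basis |n1,n2>, represented by their coefficient
  functions: v (n1,n2) is the coefficient of |n1,n2>.  Operators act on
  coefficient functions; the formulas below are exactly the linear extensions
  of the prescribed actions on basis vectors.\<close>
type_synonym vec = "nat \<times> nat \<Rightarrow> complex"
type_synonym op = "vec \<Rightarrow> vec"

text \<open>b1^+ |n1,n2> = sqrt(F_(n1+1)) |n1+1,n2>\<close>
definition b1p :: op where
  "b1p v = (\<lambda>(n1, n2). if n1 = 0 then 0
      else complex_of_real (sqrt (Fib (int n1))) * v (n1 - 1, n2))"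

text \<open>b1 |n1,n2> = sqrt(F_n1) |n1-1,n2> (zero if n1 = 0)\<close>
definition b1 :: op where
  "b1 v = (\<lambda>(n1, n2). complex_of_real (sqrt (Fib (int n1 + 1))) * v (n1 + 1, n2))"

definition b2p :: op where
  "b2p v = (\<lambda>(n1, n2). if n2 = 0 then 0
      else complex_of_real (sqrt (Fib (int n2))) * v (n1, n2 - 1))"

definition b2 :: op where
  "b2 v = (\<lambda>(n1, n2). complex_of_real (sqrt (Fib (int n2 + 1))) * v (n1, n2 + 1))"

definition N1 :: op where "N1 v = (\<lambda>(n1, n2). of_nat n1 * v (n1, n2))"
definition N2 :: op where "N2 v = (\<lambda>(n1, n2). of_nat n2 * v (n1, n2))"

definition phaseN2 :: op where
  "phaseN2 v = (\<lambda>(n1, n2). exp (- \<i> * of_real pi * of_nat n2 / 2) * v (n1, n2))"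

definition Jz :: op where "Jz v = (\<lambda>x. (N1 v x - N2 v x) / 2)"

definition twoJzF :: op where
  "twoJzF v = (\<lambda>(n1, n2). complex_of_real (Fib (int n1 - int n2)) * v (n1, n2))"

definition JpF :: op where "JpF = phaseN2 \<circ> b1p \<circ> b2"
definition JmF :: op where "JmF = b2p \<circ> b1 \<circ> phaseN2"
definition JzF :: op where "JzF = Jz"

definition opplus :: "op \<Rightarrow> op \<Rightarrow> op" where "opplus A B = (\<lambda>v x. A v x + B v x)"
definition commut :: "op \<Rightarrow> op \<Rightarrow> op" where "commut A B = (\<lambda>v x. A (B v) x - B (A v) x)"

end

theory Submission
  imports Defs
begin

text \<open>In coefficient form both ladder operators move the coefficient at (n1,n2) along the
  line n1 + n2 = const: J_+ reads it from (n1-1, n2+1), J_- from (n1+1, n2-1), with a factor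
  that vanishes at the boundary. Hence they shift the eigenvalue (n1-n2)/2 of J_z by \<plusminus>1,
  which gives the two commutators. The anticommutator is diagonal; its entry at (n1,n2) is
  (-1)^n2 (F_n1 F_(n2+1) - F_n2 F_(n1+1)), where the sign comes from the squared phase,
  and d'Ocagne's identity for the Binet form of F turns this into F_(n1-n2).\<close>

lemma phi_gt_1: "phi > 1"
proof -
  have "sqrt 5 > 1" by (simp add: real_less_rsqrt)
  then show ?thesis unfolding phi_def by simp
qed

lemma Fib_binet: "Fib k = (phi powi k - (-1/phi) powi k) / (phi - (-1/phi))"
  unfolding Fib_def by simp

lemma Fib_0 [simp]: "Fib 0 = 0"
  by (simp add: Fib_def)

lemma Fib_nonneg: "Fib (int n) \<ge> 0"
proof -
  have "(-1/phi) ^ n \<le> \<bar>-1/phi\<bar> ^ n" by (metis power_abs abs_ge_self)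
  also have "\<dots> \<le> 1" using phi_gt_1 by (intro power_le_one) auto
  also have "1 \<le> phi ^ n" using phi_gt_1 by simp
  finally show ?thesis
    using phi_gt_1 unfolding Fib_def by (simp add: power_int_of_nat add_pos_pos)
qed

lemma docagne_numerator:
  fixes a b :: "'a :: field"
  assumes ab: "a * b = -1"
  shows "(a powi m - b powi m) * (a ^ Suc n - b ^ Suc n)
       - (a ^ n - b ^ n) * (a powi (m + 1) - b powi (m + 1))
       = (-1) ^ n * (a - b) * (a powi (m - int n) - b powi (m - int n))"
proof -
  have "a \<noteq> 0" "b \<noteq> 0" using ab by auto
  define P Q where "P = a powi (m - int n)" and "Q = b powi (m - int n)"
  have am: "a powi m = P * a ^ n" and bm: "b powi m = Q * b ^ n"
    unfolding P_def Q_def using \<open>a \<noteq> 0\<close> \<open>b \<noteq> 0\<close>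
    by (simp_all flip: power_int_add power_int_of_nat)
  have am1: "a powi (m + 1) = a * a powi m" and bm1: "b powi (m + 1) = b * b powi m"
    using \<open>a \<noteq> 0\<close> \<open>b \<noteq> 0\<close> by (simp_all add: power_int_add)
  have "a ^ n * b ^ n = (-1) ^ n" using ab by (simp flip: power_mult_distrib)
  then show ?thesis
    unfolding am1 bm1 am bm power_Suc P_def[symmetric] Q_def[symmetric]
    by (simp add: algebra_simps)
qed

lemma Fib_docagne:
  "Fib m * Fib (int n + 1) - Fib (int n) * Fib (m + 1) = (-1) ^ n * Fib (m - int n)"
proof -
  define a b where "a = phi" and "b = -1/phi"
  have ab: "a * b = -1" using phi_gt_1 unfolding a_def b_def by simp
  have "a - b > 0" using phi_gt_1 unfolding a_def b_def by (simp add: add_pos_pos)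
  have F: "Fib k = (a powi k - b powi k) / (a - b)" for k
    unfolding Fib_binet a_def b_def ..
  have "Fib m * Fib (int n + 1) - Fib (int n) * Fib (m + 1)
      = ((a powi m - b powi m) * (a ^ Suc n - b ^ Suc n)
         - (a ^ n - b ^ n) * (a powi (m + 1) - b powi (m + 1))) / (a - b) ^ 2"
    unfolding F of_nat_Suc[symmetric, unfolded add.commute[of 1]] power_int_of_nat
    by (simp only: diff_divide_distrib[symmetric] times_divide_times_eq power2_eq_square power_Suc)
  also have "\<dots> = (-1) ^ n * Fib (m - int n)"
    unfolding docagne_numerator[OF ab] F using \<open>a - b > 0\<close> by (simp add: power2_eq_square)
  finally show ?thesis .
qed

definition amp :: "nat \<Rightarrow> complex" where
  "amp n = complex_of_real (sqrt (Fib (int n)))"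

definition phase :: "nat \<Rightarrow> complex" where
  "phase n = exp (- \<i> * of_real pi * of_nat n / 2)"

lemma amp_0 [simp]: "amp 0 = 0"
  by (simp add: amp_def)

lemma amp_squared: "amp n * amp n = complex_of_real (Fib (int n))"
  using Fib_nonneg[of n] by (simp add: amp_def flip: of_real_mult)

lemma phase_squared: "phase n * phase n = (-1) ^ n"
proof -
  have "phase n * phase n = exp (of_nat n * (- (\<i> * of_real pi)))"
    unfolding phase_def by (simp add: exp_add[symmetric] algebra_simps)
  also have "\<dots> = exp (- (\<i> * of_real pi)) ^ n" by (rule exp_of_nat_mult)
  finally show ?thesis by (simp add: exp_minus)
qed

text \<open>The truncated index n1 - 1 (resp. n2 - 1) is harmless: at 0 the factor amp 0 vanishes.\<close>

lemma JpF_apply: "JpF v (n1, n2) = phase n2 * amp n1 * amp (Suc n2) * v (n1 - 1, Suc n2)"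
  by (simp add: JpF_def phaseN2_def b1p_def b2_def phase_def amp_def add.commute)

lemma JmF_apply: "JmF v (n1, n2) = amp n2 * amp (Suc n1) * phase (n2 - 1) * v (Suc n1, n2 - 1)"
  by (simp add: JmF_def phaseN2_def b1_def b2p_def phase_def amp_def add.commute)

lemma Jz_apply: "Jz v (n1, n2) = (of_nat n1 - of_nat n2) / 2 * v (n1, n2)"
  by (simp add: Jz_def N1_def N2_def field_simps)

lemma commut_Jz_raising:
  assumes A: "\<And>v n1 n2. A v (n1, n2) = c n1 n2 * v (n1 - 1, Suc n2)"
    and boundary: "\<And>n2. c 0 n2 = 0"
  shows "commut Jz A = A"
proof (intro ext)
  fix v :: vec and x :: "nat \<times> nat"
  obtain n1 n2 where x: "x = (n1, n2)" by (cases x)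
  show "commut Jz A v x = A v x"
    unfolding commut_def x A Jz_apply
    by (cases n1) (simp_all add: boundary field_simps)
qed

lemma commut_Jz_lowering:
  assumes A: "\<And>v n1 n2. A v (n1, n2) = c n1 n2 * v (Suc n1, n2 - 1)"
    and boundary: "\<And>n1. c n1 0 = 0"
  shows "commut Jz A = (\<lambda>v x. - A v x)"
proof (intro ext)
  fix v :: vec and x :: "nat \<times> nat"
  obtain n1 n2 where x: "x = (n1, n2)" by (cases x)
  show "commut Jz A v x = - A v x"
    unfolding commut_def x A Jz_apply
    by (cases n2) (simp_all add: boundary field_simps)
qed

lemma JpF_JmF_apply:
  "(JpF \<circ> JmF) v (n1, n2) = (-1) ^ n2 * of_real (Fib (int n1) * Fib (int n2 + 1)) * v (n1, n2)"
proof (cases n1)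
  case (Suc k)
  have "(JpF \<circ> JmF) v (n1, n2)
      = (phase n2 * phase n2) * (amp n1 * amp n1) * (amp (Suc n2) * amp (Suc n2)) * v (n1, n2)"
    by (simp add: Suc JpF_apply JmF_apply algebra_simps)
  then show ?thesis by (simp add: phase_squared amp_squared add.commute)
qed (simp add: JpF_apply)

lemma JmF_JpF_apply:
  "(JmF \<circ> JpF) v (n1, n2) = - ((-1) ^ n2 * of_real (Fib (int n2) * Fib (int n1 + 1)) * v (n1, n2))"
proof (cases n2)
  case (Suc k)
  have "(JmF \<circ> JpF) v (n1, n2)
      = (phase k * phase k) * (amp n2 * amp n2) * (amp (Suc n1) * amp (Suc n1)) * v (n1, n2)"
    by (simp add: Suc JpF_apply JmF_apply algebra_simps)
  then show ?thesis by (simp add: Suc phase_squared amp_squared add.commute)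
qed (simp add: JmF_apply)

lemma JpF_JmF_anticommutator: "opplus (JpF \<circ> JmF) (JmF \<circ> JpF) = twoJzF"
proof (intro ext)
  fix v :: vec and x :: "nat \<times> nat"
  obtain n1 n2 where x: "x = (n1, n2)" by (cases x)
  have "opplus (JpF \<circ> JmF) (JmF \<circ> JpF) v (n1, n2)
      = (-1) ^ n2 * of_real (Fib (int n1) * Fib (int n2 + 1) - Fib (int n2) * Fib (int n1 + 1))
        * v (n1, n2)"
    unfolding opplus_def JpF_JmF_apply JmF_JpF_apply by (simp add: algebra_simps)
  also have "\<dots> = of_real (Fib (int n1 - int n2)) * v (n1, n2)"
    unfolding Fib_docagne by (simp flip: mult.assoc power_mult_distrib)
  finally show "opplus (JpF \<circ> JmF) (JmF \<circ> JpF) v x = twoJzF v x"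
    unfolding x twoJzF_def by simp
qed

theorem mainTheorem15:
  shows "opplus (JpF \<circ> JmF) (JmF \<circ> JpF) = twoJzF
    \<and> commut JzF JpF = JpF
    \<and> commut JzF JmF = (\<lambda>v x. - JmF v x)"
proof (intro conjI)
  show "opplus (JpF \<circ> JmF) (JmF \<circ> JpF) = twoJzF"
    by (rule JpF_JmF_anticommutator)
  show "commut JzF JpF = JpF"
    unfolding JzF_def by (rule commut_Jz_raising[OF JpF_apply]) simp
  show "commut JzF JmF = (\<lambda>v x. - JmF v x)"
    unfolding JzF_def by (rule commut_Jz_lowering[OF JmF_apply]) simp
qed

end
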